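(* Every object $M$ of $\bar{\mathcal{O}}$ is a direct sum of indecomposable objects of $\bar{\mathcal{O}}$.
   Context: $\mathbb{K}$ is an algebraically closed field of characteristic $0$. $\mathfrak{g}=\bigcup_{n\ge1}\mathfrak{g}_n$ is a root-reductive Lie algebra (nested finite-dimensional reductive Lie algebras with nested Cartan subalgebras, each inclusion $\mathfrak{g}_n\hookrightarrow\mathfrak{g}_{n+1}$ a root inclusion). $\mathfrak{h}$ is a splitting maximal toral subalgebra ($\mathfrak{h}\cap\mathfrak{g}_n$ maximal toral in $\mathfrak{g}_n$, $\mathfrak{g}=\mathfrak{h}\oplus\bigoplus_{\alpha\in\Delta}\mathfrak{g}^\alpha$). $\mathfrak{b}=\mathfrak{h}\oplus\mathfrak{n}$, $\mathfrak{n}=\bigoplus_{\alpha\in\Delta^+}\mathfrak{g}^\alpha$, is a splitting Borel subalgebra given by positive roots $\Delta^+$, assumed Dynkin (generated by $\mathfrak{h}$ and the simple root spaces). The extended category $\mathcal{O}$, denoted $\bar{\mathcal{O}}$, is the full subcategory of $\mathfrak{g}$-modules $M$ such that $M$ is an $\mathfrak{h}$-weight module (semisimple over $\mathfrak{h}$) with finite-dimensional weight spaces and $M$ is locally $\mathfrak{n}$-finite ($U(\mathfrak{n})\cdot v$ finite-dimensional for all $v\in M$). *)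

theory Defs
  imports Main "HOL-Computational_Algebra.Polynomial" "HOL-Library.Function_Algebras"
begin

definition alg_closed :: "'k::field itself \<Rightarrow> bool" where
  "alg_closed _ \<longleftrightarrow> (\<forall>p :: 'k poly. 0 < degree p \<longrightarrow> (\<exists>x. poly p x = 0))"

definition fin_dim :: "('k::field \<Rightarrow> 'v::ab_group_add \<Rightarrow> 'v) \<Rightarrow> 'v set \<Rightarrow> bool" where
  "fin_dim sc S \<longleftrightarrow> (\<exists>B. finite B \<and> B \<subseteq> S \<and> module.span sc B = S)"

definition lie_algebra ::
  "('k::field \<Rightarrow> 'g::ab_group_add \<Rightarrow> 'g) \<Rightarrow> ('g \<Rightarrow> 'g \<Rightarrow> 'g) \<Rightarrow> bool" where
  "lie_algebra sg br \<longleftrightarrow> vector_space sg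
     \<and> (\<forall>x y z. br (x + y) z = br x z + br y z)
     \<and> (\<forall>x y z. br x (y + z) = br x y + br x z)
     \<and> (\<forall>c x y. br (sg c x) y = sg c (br x y))
     \<and> (\<forall>c x y. br x (sg c y) = sg c (br x y))
     \<and> (\<forall>x. br x x = 0)
     \<and> (\<forall>x y z. br x (br y z) + br y (br z x) + br z (br x y) = 0)"

definition lie_subalg :: "('k::field \<Rightarrow> 'g::ab_group_add \<Rightarrow> 'g) \<Rightarrow> ('g \<Rightarrow> 'g \<Rightarrow> 'g) \<Rightarrow> 'g set \<Rightarrow> bool" where
  "lie_subalg sg br A \<longleftrightarrow> module.subspace sg A \<and> (\<forall>x\<in>A. \<forall>y\<in>A. br x y \<in> A)"

definition lie_ideal :: "('k::field \<Rightarrow> 'g::ab_group_add \<Rightarrow> 'g) \<Rightarrow> ('g \<Rightarrow> 'g \<Rightarrow> 'g) \<Rightarrow> 'g set \<Rightarrow> 'g set \<Rightarrow> bool" where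
  "lie_ideal sg br L I \<longleftrightarrow> module.subspace sg I \<and> I \<subseteq> L \<and> (\<forall>x\<in>L. \<forall>y\<in>I. br x y \<in> I)"

fun derived :: "('k::field \<Rightarrow> 'g::ab_group_add \<Rightarrow> 'g) \<Rightarrow> ('g \<Rightarrow> 'g \<Rightarrow> 'g) \<Rightarrow> 'g set \<Rightarrow> nat \<Rightarrow> 'g set" where
  "derived sg br I 0 = I"
| "derived sg br I (Suc k) =
     module.span sg {br x y | x y. x \<in> derived sg br I k \<and> y \<in> derived sg br I k}"

definition lie_solvable :: "('k::field \<Rightarrow> 'g::ab_group_add \<Rightarrow> 'g) \<Rightarrow> ('g \<Rightarrow> 'g \<Rightarrow> 'g) \<Rightarrow> 'g set \<Rightarrow> bool" where
  "lie_solvable sg br I \<longleftrightarrow> (\<exists>k. derived sg br I k = {0})"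

definition lie_center :: "('g::ab_group_add \<Rightarrow> 'g \<Rightarrow> 'g) \<Rightarrow> 'g set \<Rightarrow> 'g set" where
  "lie_center br L = {z\<in>L. \<forall>x\<in>L. br x z = 0}"

text \<open>Finite-dimensional reductive Lie (sub)algebra: the radical (largest solvable ideal)
  equals the center, i.e. every solvable ideal lies in the center.\<close>
definition reductive :: "('k::field \<Rightarrow> 'g::ab_group_add \<Rightarrow> 'g) \<Rightarrow> ('g \<Rightarrow> 'g \<Rightarrow> 'g) \<Rightarrow> 'g set \<Rightarrow> bool" where
  "reductive sg br L \<longleftrightarrow> lie_subalg sg br L \<and> fin_dim sg L
     \<and> (\<forall>I. lie_ideal sg br L I \<and> lie_solvable sg br I \<longrightarrow> I \<subseteq> lie_center br L)"

text \<open>x acts semisimply (diagonalizably) on L via the adjoint action.\<close>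
definition ad_semisimple_on :: "('k::field \<Rightarrow> 'g::ab_group_add \<Rightarrow> 'g) \<Rightarrow> ('g \<Rightarrow> 'g \<Rightarrow> 'g) \<Rightarrow> 'g set \<Rightarrow> 'g \<Rightarrow> bool" where
  "ad_semisimple_on sg br L x \<longleftrightarrow> L \<subseteq> module.span sg {y\<in>L. \<exists>c. br x y = sg c y}"

definition toral :: "('k::field \<Rightarrow> 'g::ab_group_add \<Rightarrow> 'g) \<Rightarrow> ('g \<Rightarrow> 'g \<Rightarrow> 'g) \<Rightarrow> 'g set \<Rightarrow> 'g set \<Rightarrow> bool" where
  "toral sg br L T \<longleftrightarrow> lie_subalg sg br T \<and> T \<subseteq> L \<and> (\<forall>x\<in>T. ad_semisimple_on sg br L x)"

definition max_toral :: "('k::field \<Rightarrow> 'g::ab_group_add \<Rightarrow> 'g) \<Rightarrow> ('g \<Rightarrow> 'g \<Rightarrow> 'g) \<Rightarrow> 'g set \<Rightarrow> 'g set \<Rightarrow> bool" where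
  "max_toral sg br L T \<longleftrightarrow> toral sg br L T \<and> (\<forall>T'. toral sg br L T' \<and> T \<subseteq> T' \<longrightarrow> T' = T)"

text \<open>Root space of L with respect to H for the functional \<alpha> (functionals on H are
  represented by functions 'g \<Rightarrow> 'k that vanish outside H).\<close>
definition root_space :: "('k::field \<Rightarrow> 'g::ab_group_add \<Rightarrow> 'g) \<Rightarrow> ('g \<Rightarrow> 'g \<Rightarrow> 'g) \<Rightarrow> 'g set \<Rightarrow> 'g set \<Rightarrow> ('g \<Rightarrow> 'k) \<Rightarrow> 'g set" where
  "root_space sg br L H \<alpha> = {x\<in>L. \<forall>t\<in>H. br t x = sg (\<alpha> t) x}"

definition roots :: "('k::field \<Rightarrow> 'g::ab_group_add \<Rightarrow> 'g) \<Rightarrow> ('g \<Rightarrow> 'g \<Rightarrow> 'g) \<Rightarrow> 'g set \<Rightarrow> 'g set \<Rightarrow> ('g \<Rightarrow> 'k) set" where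
  "roots sg br L H = {\<alpha>. (\<forall>t. t \<notin> H \<longrightarrow> \<alpha> t = 0) \<and> (\<exists>t\<in>H. \<alpha> t \<noteq> 0)
                        \<and> root_space sg br L H \<alpha> \<noteq> {0}}"

definition root_inclusion :: "('k::field \<Rightarrow> 'g::ab_group_add \<Rightarrow> 'g) \<Rightarrow> ('g \<Rightarrow> 'g \<Rightarrow> 'g) \<Rightarrow> 'g set \<Rightarrow> 'g set \<Rightarrow> 'g set \<Rightarrow> 'g set \<Rightarrow> bool" where
  "root_inclusion sg br L1 H1 L2 H2 \<longleftrightarrow> L1 \<subseteq> L2 \<and> H1 \<subseteq> H2 \<and>
     (\<forall>\<alpha>\<in>roots sg br L1 H1. \<exists>\<beta>\<in>roots sg br L2 H2. root_space sg br L1 H1 \<alpha> = root_space sg br L2 H2 \<beta>)"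

definition lie_hull :: "('k::field \<Rightarrow> 'g::ab_group_add \<Rightarrow> 'g) \<Rightarrow> ('g \<Rightarrow> 'g \<Rightarrow> 'g) \<Rightarrow> 'g set \<Rightarrow> 'g set" where
  "lie_hull sg br S = \<Inter>{A. lie_subalg sg br A \<and> S \<subseteq> A}"

definition simple_roots :: "('g \<Rightarrow> 'k::field) set \<Rightarrow> ('g \<Rightarrow> 'k) set" where
  "simple_roots P = {\<alpha>\<in>P. \<not> (\<exists>\<beta>\<in>P. \<exists>\<gamma>\<in>P. \<alpha> = \<beta> + \<gamma>)}"

text \<open>The nilradical n of the splitting Borel b = h \<oplus> n given by the positive roots P.\<close>
definition nil_part :: "('k::field \<Rightarrow> 'g::ab_group_add \<Rightarrow> 'g) \<Rightarrow> ('g \<Rightarrow> 'g \<Rightarrow> 'g) \<Rightarrow> 'g set \<Rightarrow> ('g \<Rightarrow> 'k) set \<Rightarrow> 'g set" where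
  "nil_part sg br h P = module.span sg (\<Union>\<alpha>\<in>P. root_space sg br UNIV h \<alpha>)"

definition borel_part :: "('k::field \<Rightarrow> 'g::ab_group_add \<Rightarrow> 'g) \<Rightarrow> ('g \<Rightarrow> 'g \<Rightarrow> 'g) \<Rightarrow> 'g set \<Rightarrow> ('g \<Rightarrow> 'k) set \<Rightarrow> 'g set" where
  "borel_part sg br h P = module.span sg (h \<union> (\<Union>\<alpha>\<in>P. root_space sg br UNIV h \<alpha>))"

text \<open>Standing assumptions: g = UNIV (of type 'g) is the union of the nested finite-dimensional
  reductive Lie algebras gs n, each inclusion a root inclusion w.r.t. the nested Cartan
  subalgebras h \<inter> gs n; h is a splitting maximal toral subalgebra; P is a set of positive
  roots (triangular decomposition) defining a splitting Borel subalgebra which is Dynkin.\<close>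
definition root_reductive_setup ::
  "('k::field \<Rightarrow> 'g::ab_group_add \<Rightarrow> 'g) \<Rightarrow> ('g \<Rightarrow> 'g \<Rightarrow> 'g) \<Rightarrow> (nat \<Rightarrow> 'g set) \<Rightarrow> 'g set
   \<Rightarrow> ('g \<Rightarrow> 'k) set \<Rightarrow> bool" where
  "root_reductive_setup sg br gs h P \<longleftrightarrow>
     lie_algebra sg br
   \<and> (\<forall>n. gs n \<subseteq> gs (Suc n)) \<and> (\<Union>n. gs n) = UNIV
   \<and> (\<forall>n. reductive sg br (gs n))
   \<and> lie_subalg sg br h
   \<and> (\<forall>n. max_toral sg br (gs n) (h \<inter> gs n))
   \<and> (\<forall>n. root_inclusion sg br (gs n) (h \<inter> gs n) (gs (Suc n)) (h \<inter> gs (Suc n)))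
   \<and> module.span sg (h \<union> (\<Union>\<alpha>\<in>roots sg br UNIV h. root_space sg br UNIV h \<alpha>)) = UNIV
   \<and> P \<subseteq> roots sg br UNIV h
   \<and> roots sg br UNIV h = P \<union> uminus ` P \<and> P \<inter> uminus ` P = {}
   \<and> (\<forall>\<alpha>\<in>P. \<forall>\<beta>\<in>P. \<alpha> + \<beta> \<in> roots sg br UNIV h \<longrightarrow> \<alpha> + \<beta> \<in> P)
   \<and> lie_hull sg br (h \<union> (\<Union>\<alpha>\<in>simple_roots P. root_space sg br UNIV h \<alpha>))
       = borel_part sg br h P"

definition g_module ::
  "('k::field \<Rightarrow> 'g::ab_group_add \<Rightarrow> 'g) \<Rightarrow> ('g \<Rightarrow> 'g \<Rightarrow> 'g) \<Rightarrow>
   ('k \<Rightarrow> 'm::ab_group_add \<Rightarrow> 'm) \<Rightarrow> ('g \<Rightarrow> 'm \<Rightarrow> 'm) \<Rightarrow> bool" where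
  "g_module sg br sm act \<longleftrightarrow> vector_space sm
     \<and> (\<forall>x y v. act (x + y) v = act x v + act y v)
     \<and> (\<forall>x v w. act x (v + w) = act x v + act x w)
     \<and> (\<forall>c x v. act (sg c x) v = sm c (act x v))
     \<and> (\<forall>c x v. act x (sm c v) = sm c (act x v))
     \<and> (\<forall>x y v. act (br x y) v = act x (act y v) - act y (act x v))"

definition submodule :: "('k::field \<Rightarrow> 'm::ab_group_add \<Rightarrow> 'm) \<Rightarrow> ('g \<Rightarrow> 'm \<Rightarrow> 'm) \<Rightarrow> 'm set \<Rightarrow> bool" where
  "submodule sm act N \<longleftrightarrow> module.subspace sm N \<and> (\<forall>x. \<forall>v\<in>N. act x v \<in> N)"

definition weight_space :: "('k::field \<Rightarrow> 'm::ab_group_add \<Rightarrow> 'm) \<Rightarrow> ('g \<Rightarrow> 'm \<Rightarrow> 'm) \<Rightarrow> 'g set \<Rightarrow> 'm set \<Rightarrow> ('g \<Rightarrow> 'k) \<Rightarrow> 'm set" where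
  "weight_space sm act h M lam = {v\<in>M. \<forall>t\<in>h. act t v = sm (lam t) v}"

text \<open>U(n) \<cdot> v: the smallest subspace containing v and stable under all of n.\<close>
definition Un_cyclic :: "('k::field \<Rightarrow> 'm::ab_group_add \<Rightarrow> 'm) \<Rightarrow> ('g \<Rightarrow> 'm \<Rightarrow> 'm) \<Rightarrow> 'g set \<Rightarrow> 'm \<Rightarrow> 'm set" where
  "Un_cyclic sm act n v = \<Inter>{W. module.subspace sm W \<and> v \<in> W \<and> (\<forall>x\<in>n. \<forall>w\<in>W. act x w \<in> W)}"

text \<open>Submodule M is an object of the extended category O (w.r.t. h and n).\<close>
definition in_Obar :: "('k::field \<Rightarrow> 'm::ab_group_add \<Rightarrow> 'm) \<Rightarrow> ('g \<Rightarrow> 'm \<Rightarrow> 'm) \<Rightarrow> 'g set \<Rightarrow> 'g set \<Rightarrow> 'm set \<Rightarrow> bool" where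
  "in_Obar sm act h n M \<longleftrightarrow> submodule sm act M
     \<and> M \<subseteq> module.span sm (\<Union>lam. weight_space sm act h M lam)
     \<and> (\<forall>lam. fin_dim sm (weight_space sm act h M lam))
     \<and> (\<forall>v\<in>M. fin_dim sm (Un_cyclic sm act n v))"

definition indecomposable_Obar :: "('k::field \<Rightarrow> 'm::ab_group_add \<Rightarrow> 'm) \<Rightarrow> ('g \<Rightarrow> 'm \<Rightarrow> 'm) \<Rightarrow> 'g set \<Rightarrow> 'g set \<Rightarrow> 'm set \<Rightarrow> bool" where
  "indecomposable_Obar sm act h n N \<longleftrightarrow> in_Obar sm act h n N \<and> N \<noteq> {0}
     \<and> (\<forall>A B. in_Obar sm act h n A \<and> in_Obar sm act h n B \<and> A \<subseteq> N \<and> B \<subseteq> N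
              \<and> N = {a + b | a b. a \<in> A \<and> b \<in> B} \<and> A \<inter> B = {0}
              \<longrightarrow> A = {0} \<or> B = {0})"

definition internal_dsum :: "('k::field \<Rightarrow> 'm::ab_group_add \<Rightarrow> 'm) \<Rightarrow> 'm set \<Rightarrow> 'm set set \<Rightarrow> bool" where
  "internal_dsum sm M Ns \<longleftrightarrow> (\<forall>N\<in>Ns. N \<subseteq> M) \<and> module.span sm (\<Union>Ns) = M
     \<and> (\<forall>F f. finite F \<and> F \<subseteq> Ns \<and> (\<forall>N\<in>F. f N \<in> N) \<and> (\<Sum>N\<in>F. f N) = 0
              \<longrightarrow> (\<forall>N\<in>F. f N = 0))"

end

theory Submission
  imports Defs
begin

text \<open>Along a chain of submodules, each weight space of the
  intersection is already attained at some member, since chains of subspaces of a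
  finite-dimensional space stabilise; hence the union of a chain of direct summands and the
  intersection of their complements are again complementary. Zorn's lemma then yields a maximal
  pair (independent family of indecomposable summands, complement of their sum). The complement
  vanishes: otherwise it contains a nonzero weight vector of some weight, and a second
  application of Zorn's lemma gives a minimal direct summand inside it still containing a
  nonzero vector of that weight; such a summand is indecomposable and could be adjoined to the
  family.\<close>

definition pair_le :: "'a set \<times> 'b set \<Rightarrow> 'a set \<times> 'b set \<Rightarrow> bool" where
  "pair_le p q \<longleftrightarrow> fst p \<subseteq> fst q \<and> snd q \<subseteq> snd p"

lemma Zorn_pairs:
  assumes "A \<noteq> {}"
    and chain_bound: "\<And>C. C \<subseteq> A \<Longrightarrow> C \<noteq> {} \<Longrightarrow> \<forall>p\<in>C. \<forall>q\<in>C. pair_le p q \<or> pair_le q p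
      \<Longrightarrow> (\<Union>(fst ` C), \<Inter>(snd ` C)) \<in> A"
  shows "\<exists>m\<in>A. \<forall>p\<in>A. pair_le m p \<longrightarrow> p = m"
proof (rule predicate_Zorn)
  show "partial_order_on A (relation_of pair_le A)"
    by (rule partial_order_on_relation_ofI) (auto simp: pair_le_def prod_eq_iff)
next
  fix C assume C: "C \<in> Chains (relation_of pair_le A)"
  show "\<exists>u\<in>A. \<forall>p\<in>C. pair_le p u"
  proof (cases "C = {}")
    case True
    then show ?thesis using assms(1) by blast
  next
    case False
    have "(\<Union>(fst ` C), \<Inter>(snd ` C)) \<in> A"
      using chain_bound[OF Chains_relation_of[OF C] False] C
      unfolding Chains_def relation_of_def by blast
    moreover have "\<forall>p\<in>C. pair_le p (\<Union>(fst ` C), \<Inter>(snd ` C))"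
      unfolding pair_le_def by auto
    ultimately show ?thesis by blast
  qed
qed

lemma pair_le_map_fst:
  assumes "mono f" and "pair_le p q"
  shows "pair_le (f (fst p), snd p) (f (fst q), snd q)"
  using assms unfolding pair_le_def mono_def by simp

definition sum_independent :: "'m::comm_monoid_add set set \<Rightarrow> bool" where
  "sum_independent Ns \<longleftrightarrow> (\<forall>F f. finite F \<and> F \<subseteq> Ns \<and> (\<forall>N\<in>F. f N \<in> N) \<and> (\<Sum>N\<in>F. f N) = 0
     \<longrightarrow> (\<forall>N\<in>F. f N = 0))"

lemma sum_independent_Union_chain:
  assumes chain: "chain\<^sub>\<subseteq> K" and indep: "\<forall>Ns\<in>K. sum_independent Ns"
  shows "sum_independent (\<Union>K)"
  unfolding sum_independent_def
proof (intro allI impI)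
  fix F f assume F: "finite F \<and> F \<subseteq> \<Union>K \<and> (\<forall>N\<in>F. f N \<in> N) \<and> (\<Sum>N\<in>F. f N) = 0"
  show "\<forall>N\<in>F. f N = 0"
  proof (cases "K = {}")
    case True
    then show ?thesis using F by blast
  next
    case False
    have "subset.chain UNIV K"
      using chain by (simp add: chain_subset_alt_def)
    then obtain Ns where Ns: "Ns \<in> K" "F \<subseteq> Ns"
      using finite_subset_Union_chain[OF _ _ False, of F UNIV] F by blast
    then have "sum_independent Ns" using indep by blast
    then show ?thesis using F Ns(2) unfolding sum_independent_def by blast
  qed
qed

context vector_space
begin

lemma fin_dim_subspace:
  assumes "fin_dim scale V" and "subspace U" and "U \<subseteq> V"
  shows "fin_dim scale U"
proof -
  obtain W where W: "finite W" "span W = V"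
    using assms(1) unfolding fin_dim_def by auto
  obtain B where B: "B \<subseteq> U" "independent B" "U \<subseteq> span B"
    by (rule basis_exists)
  have "finite B"
    using independent_span_bound[OF W(1) B(2)] B(1) assms(3) W(2) by auto
  moreover have "span B = U"
    using span_subspace[OF B(1,3) assms(2)] .
  ultimately show ?thesis
    using B(1) unfolding fin_dim_def by auto
qed

text \<open>A member of least dimension is contained in all the others.\<close>
lemma subspace_chain_has_least:
  assumes "fin_dim scale V" and "K \<noteq> {}" and sub: "\<forall>X\<in>K. subspace X \<and> X \<subseteq> V"
    and chain: "chain\<^sub>\<subseteq> K"
  shows "\<exists>X\<in>K. \<forall>Y\<in>K. X \<subseteq> Y"
proof -
  obtain W where W: "finite W" "span W = V"
    using assms(1) unfolding fin_dim_def by auto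
  obtain X where X: "X \<in> K" and least: "\<forall>Y\<in>K. dim X \<le> dim Y"
    using ex_has_least_nat[of "\<lambda>X. X \<in> K" _ dim] assms(2) by blast
  have "X \<subseteq> Y" if Y: "Y \<in> K" for Y
  proof (rule ccontr)
    assume "\<not> X \<subseteq> Y"
    then obtain x where x: "x \<in> X" "x \<notin> Y" by blast
    have YX: "Y \<subseteq> X"
      using chain X Y \<open>\<not> X \<subseteq> Y\<close> unfolding chain_subset_def by blast
    obtain BY where BY: "BY \<subseteq> Y" "independent BY" "Y \<subseteq> span BY" "card BY = dim Y"
      by (rule basis_exists)
    obtain BX where BX: "BX \<subseteq> X" "independent BX" "X \<subseteq> span BX" "card BX = dim X"
      by (rule basis_exists)
    have fin: "finite BY" "finite BX"
      using independent_span_bound[OF W(1) BY(2)] independent_span_bound[OF W(1) BX(2)]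
        BY(1) BX(1) X Y sub W(2) by blast+
    have "x \<notin> span BY"
      using x(2) span_minimal[OF BY(1)] sub Y by blast
    then have ind: "independent (insert x BY)" and "x \<notin> BY"
      using independent_insertI[OF _ BY(2)] span_base[of x BY] by blast+
    then have "card (insert x BY) = Suc (dim Y)"
      using card_insert_disjoint[OF fin(1)] BY(4) by simp
    moreover have "insert x BY \<subseteq> span BX"
      using BX(3) x(1) BY(1) YX by blast
    then have "card (insert x BY) \<le> dim X"
      using independent_span_bound[OF fin(2) ind] BX(4) by simp
    ultimately have "dim Y < dim X" by simp
    then show False using least Y by fastforce
  qed
  then show ?thesis using X by blast
qed

lemma subspace_Union_chain:
  assumes "K \<noteq> {}" and "\<forall>X\<in>K. subspace X" and chain: "chain\<^sub>\<subseteq> K"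
  shows "subspace (\<Union>K)"
  unfolding subspace_def
proof (intro conjI ballI allI)
  show "0 \<in> \<Union>K" using assms(1,2) subspace_0 by blast
next
  fix x y assume "x \<in> \<Union>K" "y \<in> \<Union>K"
  then obtain X Y where XY: "X \<in> K" "Y \<in> K" "x \<in> X" "y \<in> Y" by blast
  then have "X \<subseteq> Y \<or> Y \<subseteq> X" using chain unfolding chain_subset_def by blast
  then have "x \<in> Y \<and> y \<in> Y \<or> x \<in> X \<and> y \<in> X" using XY by blast
  then show "x + y \<in> \<Union>K"
    using XY(1,2) assms(2) subspace_add by blast
next
  fix c x assume "x \<in> \<Union>K"
  then show "scale c x \<in> \<Union>K" using assms(2) subspace_scale by blast
qed

lemma span_Union_chain:
  assumes "K \<noteq> {}" and chain: "chain\<^sub>\<subseteq> K"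
  shows "span (\<Union>K) = \<Union>(span ` K)"
proof
  show "\<Union>(span ` K) \<subseteq> span (\<Union>K)"
  proof (rule SUP_least)
    fix X assume "X \<in> K"
    then show "span X \<subseteq> span (\<Union>K)" by (intro span_mono Union_upper)
  qed
  have "chain\<^sub>\<subseteq> (span ` K)"
    unfolding chain_subset_def
  proof (intro ballI)
    fix A B assume "A \<in> span ` K" "B \<in> span ` K"
    then obtain X Y where XY: "X \<in> K" "Y \<in> K" "A = span X" "B = span Y" by blast
    then have "X \<subseteq> Y \<or> Y \<subseteq> X" using chain unfolding chain_subset_def by blast
    then show "A \<subseteq> B \<or> B \<subseteq> A" unfolding XY(3,4) by (metis span_mono)
  qed
  then have "subspace (\<Union>(span ` K))"
    using subspace_Union_chain assms(1) by simp
  moreover have "\<Union>K \<subseteq> \<Union>(span ` K)"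
    using span_superset by blast
  ultimately show "span (\<Union>K) \<subseteq> \<Union>(span ` K)"
    by (rule span_minimal[rotated])
qed

lemma span_Union_Union_chain:
  assumes "K \<noteq> {}" and chain: "chain\<^sub>\<subseteq> K"
  shows "span (\<Union>(\<Union>K)) = (\<Union>Ns\<in>K. span (\<Union>Ns))"
proof -
  have "chain\<^sub>\<subseteq> (Union ` K)"
    using chain Union_mono unfolding chain_subset_def by blast
  moreover have "Union ` K \<noteq> {}" using assms(1) by simp
  ultimately have "span (\<Union>(Union ` K)) = \<Union>(span ` Union ` K)"
    by (rule span_Union_chain[rotated])
  moreover have "\<Union>(Union ` K) = \<Union>(\<Union>K)" by blast
  ultimately show ?thesis by (simp add: image_image)
qed

lemma sum_independent_insert:
  assumes indep: "sum_independent Ns" and disj: "D \<inter> span (\<Union>Ns) \<subseteq> {0}"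
  shows "sum_independent (insert D Ns)"
  unfolding sum_independent_def
proof (intro allI impI)
  fix F f assume F: "finite F \<and> F \<subseteq> insert D Ns \<and> (\<forall>N\<in>F. f N \<in> N) \<and> (\<Sum>N\<in>F. f N) = 0"
  have rest: "\<forall>N\<in>G. f N = 0" if G: "G \<subseteq> F - {D}" "(\<Sum>N\<in>G. f N) = 0" for G
  proof -
    have "finite G \<and> G \<subseteq> Ns \<and> (\<forall>N\<in>G. f N \<in> N)"
      using G(1) F finite_subset[of G F] by blast
    then show ?thesis
      using indep G(2) unfolding sum_independent_def by blast
  qed
  show "\<forall>N\<in>F. f N = 0"
  proof (cases "D \<in> F")
    case False
    then show ?thesis using rest[of F] F by blast
  next
    case True
    let ?s = "\<Sum>N\<in>F - {D}. f N"
    have sum: "f D + ?s = 0"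
      using sum.remove[of F D f] F True by simp
    have "?s \<in> span (\<Union>Ns)"
    proof (rule span_sum)
      fix N assume "N \<in> F - {D}"
      then have "f N \<in> \<Union>Ns" using F by blast
      then show "f N \<in> span (\<Union>Ns)" by (rule span_base)
    qed
    moreover have "f D = - ?s"
      using sum by (simp add: eq_neg_iff_add_eq_0)
    ultimately have "f D \<in> span (\<Union>Ns)"
      using span_neg by simp
    then have "f D = 0"
      using disj F True by blast
    then show ?thesis using rest[of "F - {D}"] sum by auto
  qed
qed

end

locale Obar_module = vector_space sm
  for sm :: "'k::field \<Rightarrow> 'm::ab_group_add \<Rightarrow> 'm" +
  fixes act :: "'g \<Rightarrow> 'm \<Rightarrow> 'm" and h :: "'g set" and n :: "'g set"
  assumes act_add: "act x (v + w) = act x v + act x w"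
    and act_scale: "act x (sm c v) = sm c (act x v)"
    and Obar_UNIV: "in_Obar sm act h n UNIV"
begin

lemma act_zero [simp]: "act x 0 = 0"
  using act_add[of x 0 0] by simp

lemma submodule_subspace: "submodule sm act X \<Longrightarrow> subspace X"
  unfolding submodule_def by simp

lemma submodule_act: "submodule sm act X \<Longrightarrow> v \<in> X \<Longrightarrow> act x v \<in> X"
  unfolding submodule_def by simp

lemma submodule_zero: "submodule sm act X \<Longrightarrow> 0 \<in> X"
  using submodule_subspace subspace_0 by blast

lemma submodule_sums:
  assumes X: "submodule sm act X" and Y: "submodule sm act Y"
  shows "submodule sm act {a + b |a b. a \<in> X \<and> b \<in> Y}"
proof -
  have "subspace {a + b |a b. a \<in> X \<and> b \<in> Y}"
    using subspace_sums[OF submodule_subspace[OF X] submodule_subspace[OF Y]] .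
  moreover have "act x v \<in> {a + b |a b. a \<in> X \<and> b \<in> Y}"
    if v: "v \<in> {a + b |a b. a \<in> X \<and> b \<in> Y}" for x v
  proof -
    obtain a b where ab: "a \<in> X" "b \<in> Y" "v = a + b" using v by blast
    have "act x a \<in> X" "act x b \<in> Y" using submodule_act ab X Y by blast+
    then show ?thesis unfolding ab(3) act_add by blast
  qed
  ultimately show ?thesis unfolding submodule_def by blast
qed

lemma submodule_Inter:
  assumes "\<forall>X\<in>K. submodule sm act X"
  shows "submodule sm act (\<Inter>K)"
proof -
  have "subspace (\<Inter>K)"
    using assms submodule_subspace by (intro subspace_Inter) blast
  moreover have "act x v \<in> \<Inter>K" if v: "v \<in> \<Inter>K" for x v
  proof
    fix X assume "X \<in> K"
    then show "act x v \<in> X" using v assms submodule_act by blast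
  qed
  ultimately show ?thesis unfolding submodule_def by blast
qed

lemma submodule_Union_chain:
  assumes "K \<noteq> {}" and sub: "\<forall>X\<in>K. submodule sm act X" and "chain\<^sub>\<subseteq> K"
  shows "submodule sm act (\<Union>K)"
proof -
  have "subspace (\<Union>K)"
    using assms submodule_subspace by (intro subspace_Union_chain) blast+
  moreover have "act x v \<in> \<Union>K" if v: "v \<in> \<Union>K" for x v
  proof -
    obtain X where "X \<in> K" "v \<in> X" using v by blast
    then show ?thesis using sub submodule_act by blast
  qed
  ultimately show ?thesis unfolding submodule_def by blast
qed

lemma weight_space_mono: "X \<subseteq> Y \<Longrightarrow> weight_space sm act h X lam \<subseteq> weight_space sm act h Y lam"
  unfolding weight_space_def by blast

lemma subspace_weight_space:
  assumes "subspace X" shows "subspace (weight_space sm act h X lam)"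
proof -
  have X: "0 \<in> X" "\<forall>x\<in>X. \<forall>y\<in>X. x + y \<in> X" "\<forall>c. \<forall>x\<in>X. sm c x \<in> X"
    using assms unfolding subspace_def by auto
  show ?thesis unfolding subspace_def weight_space_def
    using X by (auto simp: act_add act_scale scale_right_distrib scale_left_commute)
qed

lemma weight_space_Inter_chain:
  assumes "K \<noteq> {}" and "\<forall>X\<in>K. subspace X" and chain: "chain\<^sub>\<subseteq> K"
  shows "\<exists>X\<in>K. weight_space sm act h X lam = weight_space sm act h (\<Inter>K) lam"
proof -
  let ?W = "\<lambda>X. weight_space sm act h X lam"
  have "fin_dim sm (?W UNIV)"
    using Obar_UNIV unfolding in_Obar_def by simp
  moreover have "\<forall>Y\<in>?W ` K. subspace Y \<and> Y \<subseteq> ?W UNIV"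
  proof
    fix Y assume "Y \<in> ?W ` K"
    then obtain X where "X \<in> K" "Y = ?W X" by blast
    then show "subspace Y \<and> Y \<subseteq> ?W UNIV"
      using assms(2) subspace_weight_space weight_space_mono[of X UNIV] by simp
  qed
  moreover have "chain\<^sub>\<subseteq> (?W ` K)"
    unfolding chain_subset_def
  proof (intro ballI)
    fix A B assume "A \<in> ?W ` K" "B \<in> ?W ` K"
    then obtain X Y where XY: "X \<in> K" "Y \<in> K" "A = ?W X" "B = ?W Y" by blast
    then have "X \<subseteq> Y \<or> Y \<subseteq> X" using chain unfolding chain_subset_def by blast
    then show "A \<subseteq> B \<or> B \<subseteq> A"
      unfolding XY(3,4) using weight_space_mono[of X Y] weight_space_mono[of Y X] by blast
  qed
  ultimately obtain X where X: "X \<in> K" and least: "\<forall>Y\<in>K. ?W X \<subseteq> ?W Y"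
    using subspace_chain_has_least[of "?W UNIV" "?W ` K"] assms(1) by auto
  have "?W X \<subseteq> ?W (\<Inter>K)"
    using least unfolding weight_space_def by blast
  moreover have "?W (\<Inter>K) \<subseteq> ?W X"
    using X by (intro weight_space_mono) blast
  ultimately show ?thesis using X by blast
qed

lemma subspace_eq_UNIV_if_weight_spaces_subset:
  assumes "subspace T" and "\<And>lam. weight_space sm act h UNIV lam \<subseteq> T"
  shows "T = UNIV"
proof -
  have "span (\<Union>lam. weight_space sm act h UNIV lam) \<subseteq> T"
    using span_minimal[OF _ assms(1)] assms(2) by blast
  moreover have "UNIV \<subseteq> span (\<Union>lam. weight_space sm act h UNIV lam)"
    using Obar_UNIV unfolding in_Obar_def by simp
  ultimately show ?thesis by blast
qed

lemma weight_components:
  assumes X: "submodule sm act X" and Y: "submodule sm act Y" and XY: "X \<inter> Y = {0}"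
    and a: "a \<in> X" and b: "b \<in> Y" and ab: "a + b \<in> weight_space sm act h UNIV lam"
  shows "a \<in> weight_space sm act h X lam" and "b \<in> weight_space sm act h Y lam"
proof -
  have "act t a = sm (lam t) a \<and> act t b = sm (lam t) b" if t: "t \<in> h" for t
  proof -
    let ?d = "act t a - sm (lam t) a"
    have e: "act t a + act t b = sm (lam t) a + sm (lam t) b"
      using ab t unfolding weight_space_def by (simp add: act_add scale_right_distrib)
    have "?d \<in> X"
      using submodule_subspace[OF X] submodule_act[OF X a] a by (simp add: subspace_diff subspace_scale)
    moreover have "?d = sm (lam t) b - act t b"
      using e by (simp add: algebra_simps)
    then have "?d \<in> Y"
      using submodule_subspace[OF Y] submodule_act[OF Y b] b by (simp add: subspace_diff subspace_scale)
    ultimately have "?d = 0" using XY by blast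
    then show ?thesis using e by simp
  qed
  then show "a \<in> weight_space sm act h X lam" "b \<in> weight_space sm act h Y lam"
    using a b unfolding weight_space_def by auto
qed

lemma in_Obar_ex_weight_vector:
  assumes N: "in_Obar sm act h n N" and "N \<noteq> {0}"
  shows "\<exists>lam. \<exists>w\<in>weight_space sm act h N lam. w \<noteq> 0"
proof (rule ccontr)
  assume "\<not> ?thesis"
  then have "(\<Union>lam. weight_space sm act h N lam) \<subseteq> {0}" by blast
  then have "span (\<Union>lam. weight_space sm act h N lam) \<subseteq> {0}"
    using span_minimal[OF _ subspace_single_0] by blast
  then have "N \<subseteq> {0}" using N unfolding in_Obar_def by blast
  moreover have "0 \<in> N" using N submodule_zero unfolding in_Obar_def by blast
  ultimately show False using assms(2) by blast
qed

definition complements :: "'m set \<Rightarrow> 'm set \<Rightarrow> bool" where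
  "complements X Y \<longleftrightarrow> submodule sm act X \<and> submodule sm act Y \<and> X \<inter> Y = {0}
     \<and> (\<forall>v. \<exists>a\<in>X. \<exists>b\<in>Y. v = a + b)"

lemma complements_sym: "complements X Y \<Longrightarrow> complements Y X"
  unfolding complements_def by (metis add.commute inf_commute)

lemma complementsI:
  assumes "submodule sm act X" and "submodule sm act Y" and "X \<inter> Y \<subseteq> {0}"
    and "\<And>v. \<exists>a\<in>X. \<exists>b\<in>Y. v = a + b"
  shows "complements X Y"
  using assms submodule_zero unfolding complements_def by blast

lemma complements_if_weight_vectors_split:
  assumes X: "submodule sm act X" and Y: "submodule sm act Y" and "X \<inter> Y \<subseteq> {0}"
    and split: "\<And>lam w. w \<in> weight_space sm act h UNIV lam \<Longrightarrow> \<exists>a\<in>X. \<exists>b\<in>Y. w = a + b"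
  shows "complements X Y"
proof (rule complementsI[OF X Y \<open>X \<inter> Y \<subseteq> {0}\<close>])
  have "{a + b |a b. a \<in> X \<and> b \<in> Y} = UNIV"
  proof (rule subspace_eq_UNIV_if_weight_spaces_subset)
    show "subspace {a + b |a b. a \<in> X \<and> b \<in> Y}"
      using subspace_sums[OF submodule_subspace[OF X] submodule_subspace[OF Y]] .
    show "weight_space sm act h UNIV lam \<subseteq> {a + b |a b. a \<in> X \<and> b \<in> Y}" for lam
      using split by blast
  qed
  then show "\<exists>a\<in>X. \<exists>b\<in>Y. v = a + b" for v by blast
qed

lemma complements_weight_spanned:
  assumes "complements X Y"
  shows "X \<subseteq> span (\<Union>lam. weight_space sm act h X lam)"
proof
  have X: "submodule sm act X" and Y: "submodule sm act Y" and XY: "X \<inter> Y = {0}"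
    and cover: "\<forall>v. \<exists>a\<in>X. \<exists>b\<in>Y. v = a + b"
    using assms unfolding complements_def by auto
  let ?S = "span (\<Union>lam. weight_space sm act h X lam)"
  have SX: "?S \<subseteq> X"
    by (rule span_minimal) (auto simp: weight_space_def submodule_subspace[OF X])
  have "{a + b |a b. a \<in> ?S \<and> b \<in> Y} = UNIV"
  proof (rule subspace_eq_UNIV_if_weight_spaces_subset)
    show "subspace {a + b |a b. a \<in> ?S \<and> b \<in> Y}"
      using subspace_sums[OF subspace_span submodule_subspace[OF Y]] .
    fix lam show "weight_space sm act h UNIV lam \<subseteq> {a + b |a b. a \<in> ?S \<and> b \<in> Y}"
    proof
      fix w assume w: "w \<in> weight_space sm act h UNIV lam"
      obtain a b where ab: "a \<in> X" "b \<in> Y" "w = a + b" using cover by blast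
      then have "a \<in> weight_space sm act h X lam"
        using weight_components(1)[OF X Y XY] w by blast
      then have "a \<in> ?S" by (blast intro: span_base)
      then show "w \<in> {a + b |a b. a \<in> ?S \<and> b \<in> Y}" using ab by blast
    qed
  qed
  fix v assume "v \<in> X"
  then obtain a b where ab: "a \<in> ?S" "b \<in> Y" "v = a + b"
    using \<open>{a + b |a b. a \<in> ?S \<and> b \<in> Y} = UNIV\<close> by blast
  have "b = v - a" using ab(3) by simp
  then have "b \<in> X"
    using \<open>v \<in> X\<close> ab(1) SX subspace_diff[OF submodule_subspace[OF X]] by blast
  then have "b = 0" using ab(2) XY by blast
  then show "v \<in> ?S" using ab by simp
qed

lemma in_Obar_if_complements:
  assumes "complements X Y"
  shows "in_Obar sm act h n X"
proof -
  have X: "submodule sm act X"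
    using assms unfolding complements_def by auto
  have "fin_dim sm (weight_space sm act h X lam)" for lam
  proof (rule fin_dim_subspace)
    show "fin_dim sm (weight_space sm act h UNIV lam)"
      using Obar_UNIV unfolding in_Obar_def by simp
    show "subspace (weight_space sm act h X lam)"
      using subspace_weight_space[OF submodule_subspace[OF X]] .
    show "weight_space sm act h X lam \<subseteq> weight_space sm act h UNIV lam"
      by (rule weight_space_mono) simp
  qed
  then show ?thesis
    using X complements_weight_spanned[OF assms] Obar_UNIV unfolding in_Obar_def by auto
qed

lemma complements_Union_Inter_chain:
  assumes ne: "C \<noteq> {}" and cpl: "\<forall>p\<in>C. complements (fst p) (snd p)"
    and chain: "\<forall>p\<in>C. \<forall>q\<in>C. pair_le p q \<or> pair_le q p"
  shows "complements (\<Union>(fst ` C)) (\<Inter>(snd ` C))"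
proof (rule complements_if_weight_vectors_split)
  have sub_fst: "\<forall>X\<in>fst ` C. submodule sm act X" and sub_snd: "\<forall>X\<in>snd ` C. submodule sm act X"
    using cpl unfolding complements_def by auto
  have "fst p \<subseteq> fst q \<or> fst q \<subseteq> fst p" "snd p \<subseteq> snd q \<or> snd q \<subseteq> snd p"
    if "p \<in> C" "q \<in> C" for p q
    using chain that unfolding pair_le_def by blast+
  then have chain_fst: "chain\<^sub>\<subseteq> (fst ` C)" and chain_snd: "chain\<^sub>\<subseteq> (snd ` C)"
    unfolding chain_subset_def by blast+
  show "submodule sm act (\<Union>(fst ` C))"
    using submodule_Union_chain[OF _ sub_fst chain_fst] ne by blast
  show "submodule sm act (\<Inter>(snd ` C))"
    using submodule_Inter[OF sub_snd] .
  show "\<Union>(fst ` C) \<inter> \<Inter>(snd ` C) \<subseteq> {0}"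
  proof
    fix x assume x: "x \<in> \<Union>(fst ` C) \<inter> \<Inter>(snd ` C)"
    then obtain p where p: "p \<in> C" "x \<in> fst p" by blast
    then have "x \<in> fst p \<inter> snd p" using x by blast
    then show "x \<in> {0}" using cpl p(1) unfolding complements_def by blast
  qed
  fix lam w assume w: "w \<in> weight_space sm act h UNIV lam"
  have "\<forall>X\<in>snd ` C. subspace X"
    using sub_snd submodule_subspace by blast
  moreover have "snd ` C \<noteq> {}" using ne by simp
  ultimately obtain Y where "Y \<in> snd ` C"
    and Y: "weight_space sm act h Y lam = weight_space sm act h (\<Inter>(snd ` C)) lam"
    using weight_space_Inter_chain[OF _ _ chain_snd] by blast
  then obtain p where p: "p \<in> C" "Y = snd p" by blast
  then have cp: "complements (fst p) Y" using cpl by simp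
  then obtain a b where ab: "a \<in> fst p" "b \<in> Y" "w = a + b"
    unfolding complements_def by blast
  moreover have "submodule sm act (fst p)" "submodule sm act Y" "fst p \<inter> Y = {0}"
    using cp unfolding complements_def by blast+
  ultimately have "b \<in> weight_space sm act h Y lam"
    using weight_components(2) w by blast
  then have "b \<in> \<Inter>(snd ` C)" using Y unfolding weight_space_def by blast
  moreover have "a \<in> \<Union>(fst ` C)" using ab(1) p(1) by blast
  ultimately show "\<exists>a\<in>\<Union>(fst ` C). \<exists>b\<in>\<Inter>(snd ` C). w = a + b"
    using ab(3) by blast
qed

lemma complements_refine:
  assumes cpl: "complements D E" and A: "submodule sm act A" and B: "submodule sm act B"
    and AB: "A \<inter> B = {0}" and D: "D = {a + b |a b. a \<in> A \<and> b \<in> B}"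
  shows "complements A {b + e |b e. b \<in> B \<and> e \<in> E}"
proof (rule complementsI[OF A])
  have "submodule sm act D" and E: "submodule sm act E" and DE: "D \<inter> E = {0}"
    and cover: "\<forall>v. \<exists>d\<in>D. \<exists>e\<in>E. v = d + e"
    using cpl unfolding complements_def by auto
  show "submodule sm act {b + e |b e. b \<in> B \<and> e \<in> E}"
    using submodule_sums[OF B E] .
  have AD: "A \<subseteq> D" using D submodule_zero[OF B] by force
  have BD: "B \<subseteq> D" using D submodule_zero[OF A] by force
  show "A \<inter> {b + e |b e. b \<in> B \<and> e \<in> E} \<subseteq> {0}"
  proof
    fix x assume "x \<in> A \<inter> {b + e |b e. b \<in> B \<and> e \<in> E}"
    then obtain b e where x: "x \<in> A" "b \<in> B" "e \<in> E" "x = b + e" by blast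
    have "e = x - b" using x(4) by simp
    moreover have "x - b \<in> D"
      using x(1,2) AD BD subspace_diff[OF submodule_subspace[OF \<open>submodule sm act D\<close>]] by blast
    ultimately have "e = 0" using x(3) DE by blast
    then show "x \<in> {0}" using x AB by auto
  qed
  fix v
  obtain d e where de: "d \<in> D" "e \<in> E" "v = d + e" using cover by blast
  obtain a b where ab: "a \<in> A" "b \<in> B" "d = a + b" using de(1) D by blast
  have "v = a + (b + e)" using de(3) ab(3) by (simp add: add.assoc)
  then show "\<exists>a\<in>A. \<exists>y\<in>{b + e |b e. b \<in> B \<and> e \<in> E}. v = a + y" using ab de by blast
qed

lemma complements_extend:
  assumes SC: "complements S C" and DE: "complements D E" and "D \<subseteq> C"
  shows "complements {d + s |d s. d \<in> D \<and> s \<in> S} (C \<inter> E)"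
proof (rule complementsI)
  have S: "submodule sm act S" and C: "submodule sm act C" and S_C: "S \<inter> C = {0}"
    and cover_SC: "\<forall>v. \<exists>s\<in>S. \<exists>c\<in>C. v = s + c"
    using SC unfolding complements_def by auto
  have D: "submodule sm act D" and E: "submodule sm act E" and D_E: "D \<inter> E = {0}"
    and cover_DE: "\<forall>v. \<exists>d\<in>D. \<exists>e\<in>E. v = d + e"
    using DE unfolding complements_def by auto
  show "submodule sm act {d + s |d s. d \<in> D \<and> s \<in> S}"
    using submodule_sums[OF D S] .
  have "submodule sm act (\<Inter>{C, E})"
    using C E by (intro submodule_Inter) blast
  then show "submodule sm act (C \<inter> E)" by simp
  show "{d + s |d s. d \<in> D \<and> s \<in> S} \<inter> (C \<inter> E) \<subseteq> {0}"
  proof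
    fix v assume v: "v \<in> {d + s |d s. d \<in> D \<and> s \<in> S} \<inter> (C \<inter> E)"
    then obtain d s where ds: "d \<in> D" "s \<in> S" "v = d + s" by blast
    have "s = v - d" using ds(3) by simp
    moreover have "v - d \<in> C"
      using v ds(1) \<open>D \<subseteq> C\<close> subspace_diff[OF submodule_subspace[OF C]] by blast
    ultimately have "s = 0" using ds(2) S_C by blast
    then show "v \<in> {0}" using v ds D_E by auto
  qed
  fix v
  obtain s c where sc: "s \<in> S" "c \<in> C" "v = s + c" using cover_SC by blast
  obtain d e where de: "d \<in> D" "e \<in> E" "c = d + e" using cover_DE by blast
  have "e = c - d" using de(3) by simp
  then have "e \<in> C"
    using sc(2) de(1) \<open>D \<subseteq> C\<close> subspace_diff[OF submodule_subspace[OF C]] by blast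
  moreover have "v = (d + s) + e" using sc(3) de(3) by (simp add: algebra_simps)
  ultimately show "\<exists>a\<in>{d + s |d s. d \<in> D \<and> s \<in> S}. \<exists>b\<in>C \<inter> E. v = a + b"
    using sc(1) de(1,2) by blast
qed

text \<open>Pairs are stored as (complement, summand), so that maximal elements for pair_le
  carry minimal summands.\<close>
definition weight_summands :: "('g \<Rightarrow> 'k) \<Rightarrow> 'm set \<Rightarrow> ('m set \<times> 'm set) set" where
  "weight_summands lam C = {p. complements (snd p) (fst p) \<and> snd p \<subseteq> C
     \<and> (\<exists>w\<in>weight_space sm act h (snd p) lam. w \<noteq> 0)}"

lemma weight_summands_chain_bound:
  assumes sub: "Q \<subseteq> weight_summands lam C" and ne: "Q \<noteq> {}"
    and chain: "\<forall>p\<in>Q. \<forall>q\<in>Q. pair_le p q \<or> pair_le q p"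
  shows "(\<Union>(fst ` Q), \<Inter>(snd ` Q)) \<in> weight_summands lam C"
proof -
  have cpls: "\<forall>p\<in>Q. complements (fst p) (snd p)"
  proof
    fix p assume "p \<in> Q"
    then have "complements (snd p) (fst p)" using sub unfolding weight_summands_def by blast
    then show "complements (fst p) (snd p)" by (rule complements_sym)
  qed
  have cpl: "complements (\<Inter>(snd ` Q)) (\<Union>(fst ` Q))"
    by (rule complements_sym[OF complements_Union_Inter_chain[OF ne cpls chain]])
  have "\<Inter>(snd ` Q) \<subseteq> C"
    using sub ne unfolding weight_summands_def by blast
  have "snd p \<subseteq> snd q \<or> snd q \<subseteq> snd p" if "p \<in> Q" "q \<in> Q" for p q
    using chain that unfolding pair_le_def by blast
  then have chain_snd: "chain\<^sub>\<subseteq> (snd ` Q)"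
    unfolding chain_subset_def by blast
  have subspaces: "\<forall>X\<in>snd ` Q. subspace X"
  proof
    fix X assume "X \<in> snd ` Q"
    then have "submodule sm act X" using cpls unfolding complements_def by blast
    then show "subspace X" by (rule submodule_subspace)
  qed
  have "snd ` Q \<noteq> {}" using ne by simp
  from weight_space_Inter_chain[OF this subspaces chain_snd]
  obtain Y where "Y \<in> snd ` Q"
    and eq: "weight_space sm act h Y lam = weight_space sm act h (\<Inter>(snd ` Q)) lam"
    by blast
  moreover have "\<exists>w\<in>weight_space sm act h Y lam. w \<noteq> 0"
    using \<open>Y \<in> snd ` Q\<close> sub unfolding weight_summands_def by blast
  ultimately show ?thesis
    using cpl \<open>\<Inter>(snd ` Q) \<subseteq> C\<close> unfolding weight_summands_def by simp
qed

lemma maximal_weight_summand_absorbs: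
  assumes ED: "(E, D) \<in> weight_summands lam C"
    and max: "\<forall>p\<in>weight_summands lam C. pair_le (E, D) p \<longrightarrow> p = (E, D)"
    and A: "submodule sm act A" and B: "submodule sm act B" and AB: "A \<inter> B = {0}"
    and D: "D = {a + b |a b. a \<in> A \<and> b \<in> B}"
    and a: "a \<in> weight_space sm act h A lam" "a \<noteq> 0"
  shows "B = {0}"
proof -
  have cpl: "complements D E" and "D \<subseteq> C"
    using ED unfolding weight_summands_def by auto
  have "A \<subseteq> D" using D submodule_zero[OF B] by force
  let ?E' = "{b + e |b e. b \<in> B \<and> e \<in> E}"
  have "complements A ?E'"
    using complements_refine[OF cpl A B AB D] .
  then have "(?E', A) \<in> weight_summands lam C"
    using \<open>A \<subseteq> D\<close> \<open>D \<subseteq> C\<close> a unfolding weight_summands_def by auto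
  moreover have "E \<subseteq> ?E'" using submodule_zero[OF B] by force
  then have "pair_le (E, D) (?E', A)"
    unfolding pair_le_def using \<open>A \<subseteq> D\<close> by simp
  ultimately have "A = D" using max by blast
  moreover have "B \<subseteq> D" using D submodule_zero[OF A] by force
  ultimately show "B = {0}" using AB submodule_zero[OF B] by blast
qed

lemma indecomposable_if_maximal_weight_summand:
  assumes ED: "(E, D) \<in> weight_summands lam C"
    and max: "\<forall>p\<in>weight_summands lam C. pair_le (E, D) p \<longrightarrow> p = (E, D)"
  shows "indecomposable_Obar sm act h n D"
proof -
  have cpl: "complements D E"
    and "\<exists>w\<in>weight_space sm act h D lam. w \<noteq> 0"
    using ED unfolding weight_summands_def by auto
  then obtain w where w: "w \<in> weight_space sm act h D lam" "w \<noteq> 0" by blast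
  have "A = {0} \<or> B = {0}"
    if A: "in_Obar sm act h n A" and B: "in_Obar sm act h n B"
      and D: "D = {a + b |a b. a \<in> A \<and> b \<in> B}" and AB: "A \<inter> B = {0}" for A B
  proof -
    have As: "submodule sm act A" and Bs: "submodule sm act B"
      using A B unfolding in_Obar_def by auto
    obtain a b where ab: "a \<in> A" "b \<in> B" "w = a + b"
      using w(1) D unfolding weight_space_def by blast
    have "a + b \<in> weight_space sm act h UNIV lam"
      using w(1) ab(3) unfolding weight_space_def by blast
    then have wa: "a \<in> weight_space sm act h A lam" and wb: "b \<in> weight_space sm act h B lam"
      using weight_components[OF As Bs AB ab(1,2)] by blast+
    show ?thesis
    proof (cases "a = 0")
      case False
      then show ?thesis
        using maximal_weight_summand_absorbs[OF ED max As Bs AB D wa] by blast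
    next
      case True
      then have "b \<noteq> 0" using w(2) ab(3) by simp
      moreover have "D = {b + a |b a. b \<in> B \<and> a \<in> A}"
        unfolding D by (auto; metis add.commute)
      moreover have "B \<inter> A = {0}" using AB by blast
      ultimately show ?thesis
        using maximal_weight_summand_absorbs[OF ED max Bs As _ _ wb] by blast
    qed
  qed
  moreover have "in_Obar sm act h n D"
    using in_Obar_if_complements[OF cpl] .
  moreover have "D \<noteq> {0}" using w by (auto simp: weight_space_def)
  ultimately show ?thesis
    unfolding indecomposable_Obar_def by blast
qed

lemma ex_indecomposable_summand:
  assumes "complements C Y" and "w \<in> weight_space sm act h C lam" and "w \<noteq> 0"
  shows "\<exists>D E. complements D E \<and> D \<subseteq> C \<and> indecomposable_Obar sm act h n D"
proof -
  have "(Y, C) \<in> weight_summands lam C"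
    using assms unfolding weight_summands_def by auto
  then obtain m where m: "m \<in> weight_summands lam C"
    and max: "\<forall>p\<in>weight_summands lam C. pair_le m p \<longrightarrow> p = m"
    using Zorn_pairs[of "weight_summands lam C"] weight_summands_chain_bound by blast
  obtain E D where ED: "m = (E, D)" by (cases m)
  have "indecomposable_Obar sm act h n D"
    using indecomposable_if_maximal_weight_summand m max unfolding ED .
  moreover have "complements D E" and "D \<subseteq> C"
    using m unfolding ED weight_summands_def by auto
  ultimately show ?thesis by blast
qed

definition partial_decompositions :: "('m set set \<times> 'm set) set" where
  "partial_decompositions = {p. (\<forall>N\<in>fst p. indecomposable_Obar sm act h n N)
     \<and> sum_independent (fst p) \<and> complements (span (\<Union>(fst p))) (snd p)}"

lemma partial_decompositions_chain_bound:
  assumes sub: "Q \<subseteq> partial_decompositions" and ne: "Q \<noteq> {}"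
    and chain: "\<forall>p\<in>Q. \<forall>q\<in>Q. pair_le p q \<or> pair_le q p"
  shows "(\<Union>(fst ` Q), \<Inter>(snd ` Q)) \<in> partial_decompositions"
proof -
  have "fst p \<subseteq> fst q \<or> fst q \<subseteq> fst p" if "p \<in> Q" "q \<in> Q" for p q
    using chain that unfolding pair_le_def by blast
  then have chain_fst: "chain\<^sub>\<subseteq> (fst ` Q)"
    unfolding chain_subset_def by blast
  moreover have "\<forall>Ns\<in>fst ` Q. sum_independent Ns"
    using sub unfolding partial_decompositions_def by auto
  ultimately have indep: "sum_independent (\<Union>(fst ` Q))"
    by (rule sum_independent_Union_chain)
  have indec: "\<forall>N\<in>\<Union>(fst ` Q). indecomposable_Obar sm act h n N"
    using sub unfolding partial_decompositions_def by auto
  let ?f = "\<lambda>Ns. span (\<Union>Ns)"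
  let ?Q' = "(\<lambda>p. (?f (fst p), snd p)) ` Q"
  have "mono ?f" by (intro monoI span_mono Union_mono)
  then have "\<forall>p\<in>Q. \<forall>q\<in>Q. pair_le (?f (fst p), snd p) (?f (fst q), snd q)
      \<or> pair_le (?f (fst q), snd q) (?f (fst p), snd p)"
    using chain pair_le_map_fst by blast
  then have "\<forall>p\<in>?Q'. \<forall>q\<in>?Q'. pair_le p q \<or> pair_le q p"
    by simp
  moreover have "\<forall>p\<in>?Q'. complements (fst p) (snd p)"
    using sub unfolding partial_decompositions_def by auto
  moreover have "?Q' \<noteq> {}" using ne by simp
  ultimately have "complements (\<Union>(fst ` ?Q')) (\<Inter>(snd ` ?Q'))"
    by (intro complements_Union_Inter_chain)
  moreover have "\<Union>(fst ` ?Q') = span (\<Union>(\<Union>(fst ` Q)))"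
    using span_Union_Union_chain[OF _ chain_fst] ne by (simp add: image_image)
  moreover have "\<Inter>(snd ` ?Q') = \<Inter>(snd ` Q)"
    by (simp add: image_image)
  ultimately show ?thesis
    using indep indec unfolding partial_decompositions_def by simp
qed

lemma partial_decomposition_extend:
  assumes NC: "(Ns, C) \<in> partial_decompositions" and "C \<noteq> {0}"
  shows "\<exists>p\<in>partial_decompositions. pair_le (Ns, C) p \<and> p \<noteq> (Ns, C)"
proof -
  have indec: "\<forall>N\<in>Ns. indecomposable_Obar sm act h n N" and indep: "sum_independent Ns"
    and cpl: "complements (span (\<Union>Ns)) C"
    using NC unfolding partial_decompositions_def by auto
  have "in_Obar sm act h n C"
    using in_Obar_if_complements[OF complements_sym[OF cpl]] .
  then obtain lam w where "w \<in> weight_space sm act h C lam" "w \<noteq> 0"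
    using in_Obar_ex_weight_vector \<open>C \<noteq> {0}\<close> by blast
  then obtain D E where DE: "complements D E" "D \<subseteq> C" and indec_D: "indecomposable_Obar sm act h n D"
    using ex_indecomposable_summand[OF complements_sym[OF cpl]] by blast
  have D_disj: "D \<inter> span (\<Union>Ns) \<subseteq> {0}"
    using DE(2) cpl unfolding complements_def by blast
  have "subspace D"
    using DE(1) submodule_subspace unfolding complements_def by blast
  then have "span D = D" using span_eq_iff by blast
  then have "span (\<Union>(insert D Ns)) = {d + s |d s. d \<in> D \<and> s \<in> span (\<Union>Ns)}"
    using span_Un[of D "\<Union>Ns"] by (simp only: Union_insert \<open>span D = D\<close>)
  then have "(insert D Ns, C \<inter> E) \<in> partial_decompositions"
    using complements_extend[OF cpl DE] sum_independent_insert[OF indep D_disj] indec indec_D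
    unfolding partial_decompositions_def by simp
  moreover have "pair_le (Ns, C) (insert D Ns, C \<inter> E)"
    unfolding pair_le_def by auto
  moreover have "D \<notin> Ns"
  proof
    assume "D \<in> Ns"
    then have "D \<subseteq> span (\<Union>Ns)" using span_superset by blast
    then have "D \<subseteq> {0}" using D_disj by blast
    then show False using indec_D complements_def DE(1) submodule_zero
      unfolding indecomposable_Obar_def by blast
  qed
  ultimately show ?thesis by auto
qed

lemma Obar_decomposition:
  "\<exists>Ns. (\<forall>N\<in>Ns. indecomposable_Obar sm act h n N) \<and> internal_dsum sm UNIV Ns"
proof -
  have "complements {0} UNIV"
    unfolding complements_def submodule_def by (simp add: subspace_single_0)
  then have "({}, UNIV) \<in> partial_decompositions"
    unfolding partial_decompositions_def sum_independent_def by simp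
  then obtain m where m: "m \<in> partial_decompositions"
    and max: "\<forall>p\<in>partial_decompositions. pair_le m p \<longrightarrow> p = m"
    using Zorn_pairs[of partial_decompositions] partial_decompositions_chain_bound by blast
  obtain Ns C where NsC: "m = (Ns, C)" by (cases m)
  have "C = {0}"
    using partial_decomposition_extend m max unfolding NsC by blast
  then have "span (\<Union>Ns) = UNIV"
    using m unfolding NsC partial_decompositions_def complements_def by auto
  then show ?thesis
    using m unfolding NsC partial_decompositions_def internal_dsum_def sum_independent_def by auto
qed

end

theorem mainTheorem7:
  fixes sg :: "'k::field_char_0 \<Rightarrow> 'g::ab_group_add \<Rightarrow> 'g"
    and br :: "'g \<Rightarrow> 'g \<Rightarrow> 'g"
    and gs :: "nat \<Rightarrow> 'g set"
    and h :: "'g set"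
    and P :: "('g \<Rightarrow> 'k) set"
    and sm :: "'k \<Rightarrow> 'm::ab_group_add \<Rightarrow> 'm"
    and act :: "'g \<Rightarrow> 'm \<Rightarrow> 'm"
  assumes "alg_closed TYPE('k)"
    and "root_reductive_setup sg br gs h P"
    and "g_module sg br sm act"
    and "in_Obar sm act h (nil_part sg br h P) UNIV"
  shows "\<exists>Ns. (\<forall>N\<in>Ns. indecomposable_Obar sm act h (nil_part sg br h P) N)
              \<and> internal_dsum sm UNIV Ns"
proof -
  have "Obar_module sm act h (nil_part sg br h P)"
    using assms(3,4) unfolding g_module_def Obar_module_def Obar_module_axioms_def by blast
  then show ?thesis
    by (rule Obar_module.Obar_decomposition)
qed

end
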